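(* In the transactional panorama model described in the context, answering every read transaction so as to maintain consistency-fresh ($C_f$), i.e., returning the states of its views from the latest version of the view graph, also maintains monotonicity; however, consistency-fresh and visibility cannot always be maintained together (there are executions in which the states returned under consistency-fresh contain a UC).
   Context: A view graph is a directed acyclic graph on a fixed set $N$ of nodes (source data and views); there is an edge $n_j \to n_i$ if view $n_i$ takes $n_j$ as input, and the dependents of a node are the nodes reachable from it. The view graph is multi-versioned. Write transactions $w^{t_1},\dots,w^{t_n}$ (timestamps $t_1<\dots<t_n$, starting from an initial version $G^{t_0}$) each modify some source nodes and must recompute their dependents; they are processed one at a time in timestamp order. Write transaction $w^{t_i}$ creates version $G^{t_i}=(E,N,V^{t_i})$, where for each node $n_k$ the set $V^{t_i}$ contains: the result $v_k^{t_i}$ if $w^{t_i}$ updates $n_k$ and has already computed it; a placeholder $UC_k^{t_i}$ ("under computation") if $w^{t_i}$ updates $n_k$ but has not yet computed it; or the result of $n_k$ from the previous version if $w^{t_i}$ does not update $n_k$. The latest version is the version created by the most recent write transaction (possibly not yet committed). The timestamp of a returned state is the timestamp of the version it belongs to. Read transactions $r^{s_1},\dots,r^{s_m}$ ($s_1<\dots<s_m$) each read the set of views in the user's current viewport (a subset of $N$, which may change between reads) and return immediately, without waiting, a set $H^{s_i}$ containing one state (a view result or a UC) per view read. Monotonicity: for any view $n_k$ read by two transactions $r^{s_i}, r^{s_j}$ with $s_i<s_j$, returning states with timestamps $t_p$ and $t_q$, we have $t_p \le t_q$. Visibility: no $H^{s_i}$ contains a UC. Consistency: for each $r^{s_i}$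 there is a version $G^{t_j}=(E,N,V^{t_j})$ with $t_j\le s_i$ and $H^{s_i}\subseteq V^{t_j}$. *)

theory Defs
  imports Main "HOL-Library.Library"
begin

text \<open>States of a node in a version: a computed view result, or a placeholder
  UC (under computation).  Each state records the node it belongs to and the
  timestamp of the write transaction that produced it (the initial version has
  timestamp t 0).\<close>
datatype 'n vstate = Val 'n real | UC 'n real

fun st_node :: "'n vstate \<Rightarrow> 'n" where
  "st_node (Val k x) = k" | "st_node (UC k x) = k"

fun st_ts :: "'n vstate \<Rightarrow> real" where
  "st_ts (Val k x) = x" | "st_ts (UC k x) = x"

fun is_UC :: "'n vstate \<Rightarrow> bool" where
  "is_UC (Val k x) = False" | "is_UC (UC k x) = True"

text \<open>View graph: edge (nj, ni) \<in> E iff view ni takes nj as input.  The node set N is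
  the universe of type 'n.  Source nodes have no inputs.\<close>
definition sources :: "('n \<times> 'n) set \<Rightarrow> 'n set" where
  "sources E = {k. \<forall>j. (j, k) \<notin> E}"

definition upd :: "('n \<times> 'n) set \<Rightarrow> (nat \<Rightarrow> 'n set) \<Rightarrow> nat \<Rightarrow> 'n set" where
  "upd E S i = (E\<^sup>*) `` S i"

text \<open>Contents V^{t_i} of version G^{t_i} while write i has computed exactly the nodes
  in C (of those it updates).  Earlier writes have completed, since writes are
  processed one at a time in timestamp order.\<close>
fun ver :: "('n \<times> 'n) set \<Rightarrow> (nat \<Rightarrow> 'n set) \<Rightarrow> (nat \<Rightarrow> real) \<Rightarrow> nat \<Rightarrow> 'n set \<Rightarrow> 'n \<Rightarrow> 'n vstate" where
  "ver E S t 0 C k = Val k (t 0)"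
| "ver E S t (Suc i) C k =
     (if k \<in> upd E S (Suc i)
      then (if k \<in> C then Val k (t (Suc i)) else UC k (t (Suc i)))
      else ver E S t i (upd E S i) k)"

text \<open>An execution maps each time \<tau> to (L, C): L is the index of the most recent write
  transaction (the one that created the latest version; 0 = only the initial version)
  and C is the set of nodes that write has computed so far.\<close>
definition wf_exec :: "('n \<times> 'n) set \<Rightarrow> (nat \<Rightarrow> 'n set) \<Rightarrow> (nat \<Rightarrow> real) \<Rightarrow> nat
    \<Rightarrow> (real \<Rightarrow> nat \<times> 'n set) \<Rightarrow> bool" where
  "wf_exec E S t n ex \<longleftrightarrow>
     (\<forall>\<tau>. fst (ex \<tau>) \<le> n \<and> snd (ex \<tau>) \<subseteq> upd E S (fst (ex \<tau>))
          \<and> (fst (ex \<tau>) = 0 \<or> t (fst (ex \<tau>)) \<le> \<tau>)) \<and>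
     (\<forall>\<tau> \<tau>'. \<tau> \<le> \<tau>' \<longrightarrow> fst (ex \<tau>) \<le> fst (ex \<tau>') \<and>
          (fst (ex \<tau>) = fst (ex \<tau>') \<longrightarrow> snd (ex \<tau>) \<subseteq> snd (ex \<tau>')))"

definition wf_setting :: "('n \<times> 'n) set \<Rightarrow> (nat \<Rightarrow> 'n set) \<Rightarrow> (nat \<Rightarrow> real) \<Rightarrow> nat \<Rightarrow> bool" where
  "wf_setting E S t n \<longleftrightarrow> acyclic E \<and> strict_mono_on {0..n} t \<and>
     (\<forall>i\<in>{1..n}. S i \<subseteq> sources E)"

text \<open>Consistency-fresh answer H^{s_j} of read j (at time s j, reading viewport R j):
  the states of its views in the latest version.\<close>
definition cf_answer :: "('n \<times> 'n) set \<Rightarrow> (nat \<Rightarrow> 'n set) \<Rightarrow> (nat \<Rightarrow> real)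
    \<Rightarrow> (real \<Rightarrow> nat \<times> 'n set) \<Rightarrow> (nat \<Rightarrow> real) \<Rightarrow> (nat \<Rightarrow> 'n set) \<Rightarrow> nat \<Rightarrow> 'n vstate set" where
  "cf_answer E S t ex s R j =
     (let (L, C) = ex (s j) in (\<lambda>k. ver E S t L C k) ` R j)"

definition monotonic :: "(nat \<Rightarrow> real) \<Rightarrow> nat \<Rightarrow> (nat \<Rightarrow> 'n vstate set) \<Rightarrow> bool" where
  "monotonic s m H \<longleftrightarrow> (\<forall>i\<in>{1..m}. \<forall>j\<in>{1..m}. s i < s j \<longrightarrow>
     (\<forall>x\<in>H i. \<forall>y\<in>H j. st_node x = st_node y \<longrightarrow> st_ts x \<le> st_ts y))"

definition visible :: "nat \<Rightarrow> (nat \<Rightarrow> 'n vstate set) \<Rightarrow> bool" where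
  "visible m H \<longleftrightarrow> (\<forall>j\<in>{1..m}. \<forall>x\<in>H j. \<not> is_UC x)"

end

theory Submission
  imports Defs
begin

text \<open>Under consistency-fresh every read returns states of the latest version, and the
  latest version only moves forward in time.  A state in version L carries the timestamp
  of the last write up to L that updated its node, so it is at most t L and at least the
  timestamp of the same node in any earlier version: monotonicity follows.  Visibility
  fails as soon as a read arrives while the latest write has not yet computed a node
  in the viewport.\<close>

lemma st_node_ver [simp]: "st_node (ver E S t L C k) = k"
  by (induction L arbitrary: C) auto

lemma st_ts_ver_indep_computed: "st_ts (ver E S t L C k) = st_ts (ver E S t L C' k)"
  by (cases L) auto

lemma st_ts_ver_le:
  assumes "strict_mono_on {0..n} t" and "L \<le> n"
  shows "st_ts (ver E S t L C k) \<le> t L"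
  using assms
proof (induction L arbitrary: C)
  case 0
  then show ?case by simp
next
  case (Suc i)
  have "st_ts (ver E S t i (upd E S i) k) \<le> t i"
    using Suc by simp
  also have "t i < t (Suc i)"
    using Suc.prems by (auto simp: strict_mono_on_def)
  finally show ?case by simp
qed

lemma st_ts_ver_mono:
  assumes "strict_mono_on {0..n} t" and "L' \<le> n" and "L \<le> L'"
  shows "st_ts (ver E S t L C k) \<le> st_ts (ver E S t L' C' k)"
  using assms
proof (induction L' arbitrary: L C C')
  case 0
  then show ?case by simp
next
  case (Suc i)
  show ?case
  proof (cases "L = Suc i")
    case True
    then show ?thesis by (simp add: st_ts_ver_indep_computed[where C=C and C'=C'])
  next
    case False
    with Suc.prems have "L \<le> i" by simp
    then have "st_ts (ver E S t L C k) \<le> st_ts (ver E S t i (upd E S i) k)"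
      using Suc by simp
    also have "\<dots> \<le> st_ts (ver E S t (Suc i) C' k)"
    proof -
      have "st_ts (ver E S t i (upd E S i) k) \<le> t i"
        using Suc.prems by (intro st_ts_ver_le[of n]) auto
      also have "t i < t (Suc i)"
        using Suc.prems by (auto simp: strict_mono_on_def)
      finally show ?thesis by simp
    qed
    finally show ?thesis .
  qed
qed

lemma ver_UC_if_not_computed:
  assumes "k \<in> upd E S (Suc i)" and "k \<notin> C"
  shows "is_UC (ver E S t (Suc i) C k)"
  using assms by simp

lemma mem_cf_answer_iff:
  "x \<in> cf_answer E S t ex s R j \<longleftrightarrow>
     (\<exists>k\<in>R j. x = ver E S t (fst (ex (s j))) (snd (ex (s j))) k)"
  by (auto simp: cf_answer_def split: prod.split)

lemma monotonic_cf_answer: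
  assumes "strict_mono_on {0..n} t" and "wf_exec E S t n ex"
  shows "monotonic s m (cf_answer E S t ex s R)"
  unfolding monotonic_def
proof (intro ballI impI)
  fix i j x y
  assume "s i < s j" and "x \<in> cf_answer E S t ex s R i" and "y \<in> cf_answer E S t ex s R j"
    and "st_node x = st_node y"
  then obtain k where
    x: "x = ver E S t (fst (ex (s i))) (snd (ex (s i))) k" and
    y: "y = ver E S t (fst (ex (s j))) (snd (ex (s j))) k"
    by (auto simp: mem_cf_answer_iff)
  have "fst (ex (s j)) \<le> n" and "fst (ex (s i)) \<le> fst (ex (s j))"
    using assms(2) \<open>s i < s j\<close> by (auto simp: wf_exec_def)
  then show "st_ts x \<le> st_ts y"
    unfolding x y by (rule st_ts_ver_mono[OF assms(1)])
qed

text \<open>One write, at time 1, modifying every node of an edgeless graph; a single read at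
  time 1 sees it before anything has been computed.\<close>
lemma cf_answer_not_visible_example:
  defines "ex \<equiv> \<lambda>\<tau>::real. if 1 \<le> \<tau> then (1::nat, {}) else (0, {})"
  shows "wf_setting ({} :: ('n \<times> 'n) set) (\<lambda>_. UNIV) real 1"
    and "wf_exec ({} :: ('n \<times> 'n) set) (\<lambda>_. UNIV) real 1 ex"
    and "strict_mono_on {1..1} (\<lambda>_::nat. 1::real)"
    and "\<not> visible 1 (cf_answer ({} :: ('n \<times> 'n) set) (\<lambda>_. UNIV) real ex (\<lambda>_. 1) (\<lambda>_. UNIV))"
proof -
  show "wf_setting ({} :: ('n \<times> 'n) set) (\<lambda>_. UNIV) real 1"
    by (auto simp: wf_setting_def sources_def strict_mono_on_def acyclic_def)
  show "wf_exec ({} :: ('n \<times> 'n) set) (\<lambda>_. UNIV) real 1 ex"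
    by (auto simp: wf_exec_def ex_def)
  show "strict_mono_on {1..1} (\<lambda>_::nat. 1::real)"
    by (simp add: strict_mono_on_def)
  have "is_UC (ver ({} :: ('n \<times> 'n) set) (\<lambda>_. UNIV) real (Suc 0) {} k)" for k
    by (rule ver_UC_if_not_computed) (auto simp: upd_def)
  moreover have "ver ({} :: ('n \<times> 'n) set) (\<lambda>_. UNIV) real (Suc 0) {} k
      \<in> cf_answer ({} :: ('n \<times> 'n) set) (\<lambda>_. UNIV) real ex (\<lambda>_. 1) (\<lambda>_. UNIV) 1" for k
    by (auto simp: mem_cf_answer_iff ex_def simp del: ver.simps)
  ultimately show "\<not> visible 1 (cf_answer ({} :: ('n \<times> 'n) set) (\<lambda>_. UNIV) real ex (\<lambda>_. 1) (\<lambda>_. UNIV))"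
    unfolding visible_def by fastforce
qed

theorem theorem2p5:
  shows "(\<forall>(E :: ('n \<times> 'n) set) S t n ex (s :: nat \<Rightarrow> real) R m.
            wf_setting E S t n \<and> wf_exec E S t n ex \<and> strict_mono_on {1..m} s
            \<longrightarrow> monotonic s m (cf_answer E S t ex s R))
       \<and> (\<exists>(E :: ('n \<times> 'n) set) S t n ex (s :: nat \<Rightarrow> real) R m.
            wf_setting E S t n \<and> wf_exec E S t n ex \<and> strict_mono_on {1..m} s
            \<and> \<not> visible m (cf_answer E S t ex s R))"
proof
  show "\<forall>E S t n ex s R m. wf_setting E S t n \<and> wf_exec E S t n ex \<and> strict_mono_on {1..m} s
          \<longrightarrow> monotonic s m (cf_answer E S t ex s R)"
    by (auto simp: wf_setting_def intro: monotonic_cf_answer)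
  show "\<exists>(E :: ('n \<times> 'n) set) S t n ex (s :: nat \<Rightarrow> real) R m.
          wf_setting E S t n \<and> wf_exec E S t n ex \<and> strict_mono_on {1..m} s
          \<and> \<not> visible m (cf_answer E S t ex s R)"
    using cf_answer_not_visible_example by blast
qed

end
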